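(* Let $d\ge 2$ be an integer with $d\ne 3$, let $w=(-1,1,\dots,1)^\intercal\in\mathbb R^{d+2}$, and let $\mathbf U=\mathbf U_n\cdots\mathbf U_2\mathbf U_1$ be a word with letters in $\{\mathbf R_1,\dots,\mathbf R_{d+2}\}$ (evaluated as a matrix product) such that $\mathbf U_1=\mathbf R_1$ and no two consecutive letters are equal. Then for every $1\le i\le d+2$ such that the letter $\mathbf R_i$ occurs in $\mathbf U$, we have $\sigma_i^w(\mathbf U)\ne 1$.
   Context: Let $\mathbf e\in\mathbb R^{d+2}$ be the all-ones vector, $\mathbf e_i$ the $i$-th standard basis vector and $\mathbf I$ the $(d+2)\times(d+2)$ identity. For $1\le i\le d+2$, $\mathbf R_i=\mathbf I+\frac{2}{d-1}\mathbf e_i\mathbf e^\intercal-\frac{2d}{d-1}\mathbf e_i\mathbf e_i^\intercal$ (equal to $\mathbf I$ except that row $i$ has diagonal entry $-1$ and off-diagonal entries $2/(d-1)$). For a matrix $\mathbf U$, $\sigma_i^w(\mathbf U)=\mathbf e_i^\intercal\mathbf U w$ is the $w$-weighted sum of the $i$-th row. *)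

theory Defs
  imports Complex_Main "Jordan_Normal_Form.Matrix"
begin

text \<open>Matrices of size (d+2) x (d+2); the paper's 1-based index i corresponds to
  the 0-based JNF index i - 1.\<close>

definition all_ones :: "nat \<Rightarrow> real vec" where
  "all_ones n = vec n (\<lambda>_. 1)"

definition outer :: "real vec \<Rightarrow> real vec \<Rightarrow> real mat" where
  "outer u v = mat (dim_vec u) (dim_vec v) (\<lambda>(r, c). u $ r * v $ c)"

definition R :: "nat \<Rightarrow> nat \<Rightarrow> real mat" where
  "R d i = 1\<^sub>m (d+2)
     + (2 / (real d - 1)) \<cdot>\<^sub>m outer (unit_vec (d+2) (i-1)) (all_ones (d+2))
     - (2 * real d / (real d - 1)) \<cdot>\<^sub>m outer (unit_vec (d+2) (i-1)) (unit_vec (d+2) (i-1))"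

text \<open>Word U = U_n ... U_2 U_1 given by the list [a_1, ..., a_n] of letter indices,
  U_k = R_{a_k}.\<close>
definition word_mat :: "nat \<Rightarrow> nat list \<Rightarrow> real mat" where
  "word_mat d ws = foldl (\<lambda>M i. R d i * M) (1\<^sub>m (d+2)) ws"

definition sigma :: "nat \<Rightarrow> real vec \<Rightarrow> real mat \<Rightarrow> real" where
  "sigma i w U = (U *\<^sub>v w) $ (i-1)"

definition w_vec :: "nat \<Rightarrow> real vec" where
  "w_vec d = vec (d+2) (\<lambda>k. if k = 0 then -1 else 1)"

end

theory Submission
  imports Defs "HOL-Computational_Algebra.Primes"
begin

text \<open>Write \<open>v = U w\<close>, so that \<open>\<sigma>\<^sub>i\<^sup>w(U) = v\<^sub>i\<close>. The letter \<open>R\<^sub>i\<close> replaces \<open>v\<^sub>i\<close> by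
  \<open>-v\<^sub>i\<close> plus \<open>c = 2/(d-1)\<close> times the sum of the other entries, and leaves those entries
  alone, so it suffices that each letter writes a value \<open>\<noteq> 1\<close>.
  If \<open>c\<close> has \<open>p\<close>-adic valuation \<open>-e < 0\<close> (for an odd prime \<open>p\<close> dividing \<open>d - 1\<close>, or \<open>p = 2\<close>
  when \<open>d - 1 = 2\<^sup>k\<close> with \<open>k \<ge> 3\<close>), then after the first letter the last entry written has
  valuation exactly \<open>-n < 0\<close> and all others valuation \<open>\<ge> -(n-1)\<close>. Since consecutive letters
  differ, the next letter writes an entry of valuation exactly \<open>-(n+e)\<close>, so the invariant
  persists and no written value is \<open>1\<close>. For \<open>d = 5\<close> the invariant only starts after the
  second letter; for \<open>d = 2\<close> no prime is available and positivity takes over: the entries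
  stay \<open>\<ge> 1\<close> and the last one written is a strict maximum.\<close>

definition refl_coef :: "nat \<Rightarrow> real" where
  "refl_coef d = 2 / (real d - 1)"

definition refl_update :: "nat \<Rightarrow> nat \<Rightarrow> (nat \<Rightarrow> real) \<Rightarrow> nat \<Rightarrow> real" where
  "refl_update d i f = f(i := - f i + refl_coef d * (\<Sum>k\<in>{..<d+2} - {i}. f k))"

lemma refl_update_same: "refl_update d i f i = - f i + refl_coef d * (\<Sum>k\<in>{..<d+2} - {i}. f k)"
  by (simp add: refl_update_def)

lemma refl_update_other: "k \<noteq> i \<Longrightarrow> refl_update d i f k = f k"
  by (simp add: refl_update_def)

lemma R_carrier: "R d a \<in> carrier_mat (d+2) (d+2)"
  unfolding R_def outer_def by auto

lemma R_index:
  assumes "r < d+2" "k < d+2"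
  shows "R d a $$ (r, k) = (if r = k then 1 else 0)
    + (if r = a - 1 then refl_coef d - (if k = a - 1 then 2 * real d / (real d - 1) else 0) else 0)"
  using assms by (simp add: R_def outer_def all_ones_def unit_vec_def refl_coef_def)

lemma R_mult_vec:
  assumes "d \<noteq> 1" "v \<in> carrier_vec (d+2)"
  shows "R d a *\<^sub>v v = vec (d+2) (refl_update d (a - 1) (($) v))"
proof (rule eq_vecI)
  fix r assume "r < dim_vec (vec (d+2) (refl_update d (a - 1) (($) v)))"
  then have r: "r < d+2" by simp
  let ?i = "a - 1"
  have "(R d a *\<^sub>v v) $ r = (\<Sum>k<d+2. R d a $$ (r, k) * v $ k)"
    using R_carrier[of d a] r assms(2) by (simp add: scalar_prod_def atLeast0LessThan)
  also have "\<dots> = refl_update d ?i (($) v) r"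
  proof (cases "r = ?i")
    case True
    have "2 * real d / (real d - 1) = 2 + refl_coef d"
      using assms(1) by (simp add: refl_coef_def field_simps)
    then have "(\<Sum>k<d+2. R d a $$ (r, k) * v $ k)
        = (\<Sum>k<d+2. refl_coef d * v $ k + (if k = ?i then (- 1 - refl_coef d) * v $ k else 0))"
      using r True by (intro sum.cong) (auto simp: R_index algebra_simps)
    also have "\<dots> = refl_coef d * (\<Sum>k<d+2. v $ k) - (1 + refl_coef d) * v $ ?i"
      using r True by (simp add: sum.distrib sum_distrib_left algebra_simps del: sum.lessThan_Suc)
    also have "(\<Sum>k<d+2. v $ k) = v $ ?i + (\<Sum>k\<in>{..<d+2} - {?i}. v $ k)"
      using r True by (simp add: sum.remove del: sum.lessThan_Suc)
    finally show ?thesis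
      using True by (simp add: refl_update_same algebra_simps)
  next
    case False
    then have "(\<Sum>k<d+2. R d a $$ (r, k) * v $ k) = (\<Sum>k<d+2. if k = r then v $ k else 0)"
      using r by (intro sum.cong) (auto simp: R_index)
    then show ?thesis
      using r False by (simp add: refl_update_other)
  qed
  finally show "(R d a *\<^sub>v v) $ r = vec (d+2) (refl_update d ?i (($) v)) $ r"
    using r by simp
qed (simp add: R_carrier[THEN carrier_matD(1)])

definition weighted_row_sums :: "nat \<Rightarrow> nat list \<Rightarrow> nat \<Rightarrow> real" where
  "weighted_row_sums d ws = foldl (\<lambda>f a. refl_update d (a - 1) f) (\<lambda>k. if k = 0 then -1 else 1) ws"

lemma weighted_row_sums_snoc:
  "weighted_row_sums d (ws @ [a]) = refl_update d (a - 1) (weighted_row_sums d ws)"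
  by (simp add: weighted_row_sums_def)

lemma refl_update_vec:
  "k < d+2 \<Longrightarrow> refl_update d i (($) (vec (d+2) f)) k = refl_update d i f k"
  unfolding refl_update_def by (auto intro!: sum.cong)

lemma word_mat_snoc: "word_mat d (ws @ [a]) = R d a * word_mat d ws"
  by (simp add: word_mat_def)

lemma word_mat_mult_w_vec:
  assumes "d \<noteq> 1"
  shows "word_mat d ws \<in> carrier_mat (d+2) (d+2) \<and>
    word_mat d ws *\<^sub>v w_vec d = vec (d+2) (weighted_row_sums d ws)"
proof (induction ws rule: rev_induct)
  case Nil
  show ?case by (auto simp: word_mat_def weighted_row_sums_def w_vec_def)
next
  case (snoc a ws)
  then have W: "word_mat d ws \<in> carrier_mat (d+2) (d+2)" by simp
  have "word_mat d (ws @ [a]) *\<^sub>v w_vec d = R d a *\<^sub>v (word_mat d ws *\<^sub>v w_vec d)"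
    unfolding word_mat_snoc by (rule assoc_mult_mat_vec[OF R_carrier W]) (simp add: w_vec_def)
  also have "\<dots> = vec (d+2) (refl_update d (a - 1) (($) (vec (d+2) (weighted_row_sums d ws))))"
    using snoc assms by (simp add: R_mult_vec)
  also have "\<dots> = vec (d+2) (weighted_row_sums d (ws @ [a]))"
    using refl_update_vec[of _ d "a - 1" "weighted_row_sums d ws"]
    by (intro eq_vecI) (auto simp: weighted_row_sums_snoc)
  finally show ?case
    using W R_carrier[of d a] by (simp add: word_mat_snoc)
qed

lemma sigma_eq_weighted_row_sums:
  "d \<noteq> 1 \<Longrightarrow> i \<le> d + 2 \<Longrightarrow> sigma i (w_vec d) (word_mat d ws) = weighted_row_sums d ws (i - 1)"
  using word_mat_mult_w_vec[of d ws] by (simp add: sigma_def)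

definition padic_val_ge_neg :: "int \<Rightarrow> nat \<Rightarrow> real \<Rightarrow> bool" where
  "padic_val_ge_neg p n x \<longleftrightarrow> (\<exists>y u. \<not> p dvd u \<and> x = of_int y / (of_int u * of_int p ^ n))"

definition padic_val_eq_neg :: "int \<Rightarrow> nat \<Rightarrow> real \<Rightarrow> bool" where
  "padic_val_eq_neg p n x \<longleftrightarrow>
     (\<exists>y u. \<not> p dvd y \<and> \<not> p dvd u \<and> x = of_int y / (of_int u * of_int p ^ n))"

lemma padic_val_eq_neg_imp_ge: "padic_val_eq_neg p n x \<Longrightarrow> padic_val_ge_neg p n x"
  unfolding padic_val_eq_neg_def padic_val_ge_neg_def by blast

lemma padic_val_ge_neg_of_int:
  assumes "prime p"
  shows "padic_val_ge_neg p n (of_int y)"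
proof -
  have "of_int y = of_int (y * p ^ n) / (of_int 1 * of_int p ^ n :: real)"
    using assms by (simp add: prime_gt_0_int)
  then show ?thesis
    using assms unfolding padic_val_ge_neg_def by (metis not_prime_unit)
qed

lemma padic_val_ge_neg_mono:
  assumes "padic_val_ge_neg p m x" "m \<le> n" "p \<noteq> 0"
  shows "padic_val_ge_neg p n x"
proof -
  obtain y u where yu: "\<not> p dvd u" "x = of_int y / (of_int u * of_int p ^ m)"
    using assms(1) unfolding padic_val_ge_neg_def by blast
  have "(of_int p :: real) ^ n = of_int p ^ m * of_int p ^ (n - m)"
    using assms(2) by (simp flip: power_add)
  moreover have "u \<noteq> 0"
    using yu(1) by auto
  ultimately have "x = of_int (y * p ^ (n - m)) / (of_int u * of_int p ^ n)"
    using yu(2) assms(3) by (simp add: field_simps)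
  then show ?thesis
    using yu(1) unfolding padic_val_ge_neg_def by blast
qed

lemma padic_val_ge_neg_uminus: "padic_val_ge_neg p n x \<Longrightarrow> padic_val_ge_neg p n (- x)"
  unfolding padic_val_ge_neg_def by (metis minus_divide_left of_int_minus)

lemma padic_val_ge_neg_add:
  assumes "prime p" "padic_val_ge_neg p n x" "padic_val_ge_neg p n x'"
  shows "padic_val_ge_neg p n (x + x')"
proof -
  obtain y u where 1: "\<not> p dvd u" "x = of_int y / (of_int u * of_int p ^ n)"
    using assms(2) unfolding padic_val_ge_neg_def by blast
  obtain y' u' where 2: "\<not> p dvd u'" "x' = of_int y' / (of_int u' * of_int p ^ n)"
    using assms(3) unfolding padic_val_ge_neg_def by blast
  have "u \<noteq> 0" "u' \<noteq> 0" "p \<noteq> 0"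
    using 1 2 assms(1) by auto
  then have "x + x' = of_int (y * u' + y' * u) / (of_int (u * u') * of_int p ^ n)"
    using 1 2 by (simp add: field_simps)
  moreover have "\<not> p dvd u * u'"
    using 1 2 assms(1) prime_dvd_mult_iff by blast
  ultimately show ?thesis
    unfolding padic_val_ge_neg_def by blast
qed

lemma padic_val_ge_neg_sum:
  assumes "prime p" "\<And>k. k \<in> A \<Longrightarrow> padic_val_ge_neg p n (f k)"
  shows "padic_val_ge_neg p n (\<Sum>k\<in>A. f k)"
  using assms(2)
proof (induction A rule: infinite_finite_induct)
  case (infinite A)
  then show ?case using padic_val_ge_neg_of_int[OF assms(1), of n 0] by simp
next
  case empty
  then show ?case using padic_val_ge_neg_of_int[OF assms(1), of n 0] by simp
next
  case (insert x F)
  then show ?case by (simp add: padic_val_ge_neg_add assms(1))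
qed

lemma padic_val_eq_neg_add:
  assumes "prime p" "n \<ge> 1" "padic_val_eq_neg p n x" "padic_val_ge_neg p (n - 1) x'"
  shows "padic_val_eq_neg p n (x + x')"
proof -
  obtain y u where 1: "\<not> p dvd y" "\<not> p dvd u" "x = of_int y / (of_int u * of_int p ^ n)"
    using assms(3) unfolding padic_val_eq_neg_def by blast
  obtain y' u' where 2: "\<not> p dvd u'" "x' = of_int y' / (of_int u' * of_int p ^ (n - 1))"
    using assms(4) unfolding padic_val_ge_neg_def by blast
  have "u \<noteq> 0" "u' \<noteq> 0" "p \<noteq> 0"
    using 1 2 assms(1) by auto
  moreover have "(of_int p :: real) ^ n = of_int p * of_int p ^ (n - 1)"
    using assms(2) by (simp flip: power_Suc)
  ultimately have x: "x + x' = of_int (y * u' + y' * u * p) / (of_int (u * u') * of_int p ^ n)"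
    unfolding 1(3) 2(2) by (simp add: field_simps)
  have "\<not> p dvd u * u'" "\<not> p dvd y * u'"
    using 1 2 assms(1) prime_dvd_mult_iff by blast+
  then have "\<not> p dvd y * u' + y' * u * p"
    by (simp add: dvd_add_left_iff)
  with x \<open>\<not> p dvd u * u'\<close> show ?thesis
    unfolding padic_val_eq_neg_def by blast
qed

lemma padic_val_eq_neg_mult:
  assumes "prime p" "padic_val_eq_neg p m x" "padic_val_eq_neg p n x'"
  shows "padic_val_eq_neg p (m + n) (x * x')"
proof -
  obtain y u where 1: "\<not> p dvd y" "\<not> p dvd u" "x = of_int y / (of_int u * of_int p ^ m)"
    using assms(2) unfolding padic_val_eq_neg_def by blast
  obtain y' u' where 2: "\<not> p dvd y'" "\<not> p dvd u'" "x' = of_int y' / (of_int u' * of_int p ^ n)"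
    using assms(3) unfolding padic_val_eq_neg_def by blast
  have "x * x' = of_int (y * y') / (of_int (u * u') * of_int p ^ (m + n))"
    using 1 2 by (simp add: power_add)
  moreover have "\<not> p dvd y * y'" "\<not> p dvd u * u'"
    using 1 2 assms(1) prime_dvd_mult_iff by blast+
  ultimately show ?thesis
    unfolding padic_val_eq_neg_def by blast
qed

lemma padic_val_eq_neg_ne_one:
  assumes "prime p" "n \<ge> 1" "padic_val_eq_neg p n x"
  shows "x \<noteq> 1"
proof
  assume "x = 1"
  obtain y u where yu: "\<not> p dvd y" "\<not> p dvd u" "x = of_int y / (of_int u * of_int p ^ n)"
    using assms(3) unfolding padic_val_eq_neg_def by blast
  with \<open>x = 1\<close> assms(1) have "y = u * p ^ n"
    by (metis divide_eq_1_iff of_int_eq_iff of_int_mult of_int_power)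
  with assms(2) yu(1) show False
    by (simp add: dvd_power)
qed

definition dominant_pole :: "int \<Rightarrow> nat \<Rightarrow> nat \<Rightarrow> (nat \<Rightarrow> real) \<Rightarrow> bool" where
  "dominant_pole p n j f \<longleftrightarrow> n \<ge> 1 \<and> padic_val_eq_neg p n (f j) \<and>
     (\<forall>k. k \<noteq> j \<longrightarrow> padic_val_ge_neg p (n - 1) (f k))"

lemma dominant_pole_ne_one: "prime p \<Longrightarrow> dominant_pole p n j f \<Longrightarrow> f j \<noteq> 1"
  unfolding dominant_pole_def using padic_val_eq_neg_ne_one by blast

text \<open>The new entry is \<open>-f i + c (f j + \<dots>)\<close>: the sum inherits the exact pole of \<open>f j\<close>,
  multiplying by \<open>c\<close> raises its order by \<open>e\<close>, and \<open>-f i\<close> is too small to interfere.\<close>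

lemma dominant_pole_refl_update:
  assumes p: "prime p" and c: "padic_val_eq_neg p e (refl_coef d)" "e \<ge> 1"
    and f: "dominant_pole p n j f" and "j < d + 2" "i \<noteq> j"
  shows "dominant_pole p (n + e) i (refl_update d i f)"
proof -
  have n: "n \<ge> 1" and fj: "padic_val_eq_neg p n (f j)"
    and fk: "\<And>k. k \<noteq> j \<Longrightarrow> padic_val_ge_neg p (n - 1) (f k)"
    using f unfolding dominant_pole_def by auto
  have p0: "p \<noteq> 0"
    using p by auto
  have "(\<Sum>k\<in>{..<d+2} - {i}. f k) = f j + (\<Sum>k\<in>{..<d+2} - {i} - {j}. f k)"
    using assms(5,6) by (simp add: sum.remove)
  moreover have "padic_val_ge_neg p (n - 1) (\<Sum>k\<in>{..<d+2} - {i} - {j}. f k)"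
    using fk by (intro padic_val_ge_neg_sum p) auto
  ultimately have "padic_val_eq_neg p n (\<Sum>k\<in>{..<d+2} - {i}. f k)"
    using padic_val_eq_neg_add[OF p n fj] by simp
  then have sum: "padic_val_eq_neg p (n + e) (refl_coef d * (\<Sum>k\<in>{..<d+2} - {i}. f k))"
    using padic_val_eq_neg_mult[OF p c(1)] by (metis add.commute)
  have "padic_val_ge_neg p (n + e - 1) (- f i)"
    using fk[OF assms(6)] padic_val_ge_neg_mono p0 padic_val_ge_neg_uminus by force
  with sum n have "padic_val_eq_neg p (n + e) (refl_coef d * (\<Sum>k\<in>{..<d+2} - {i}. f k) + - f i)"
    by (intro padic_val_eq_neg_add[OF p]) auto
  then have new: "padic_val_eq_neg p (n + e) (refl_update d i f i)"
    by (simp add: refl_update_same add.commute)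
  have "padic_val_ge_neg p (n + e - 1) (refl_update d i f k)" if "k \<noteq> i" for k
  proof (cases "k = j")
    case True
    have "padic_val_ge_neg p (n + e - 1) (f j)"
      using c(2) p0 by (intro padic_val_ge_neg_mono[OF padic_val_eq_neg_imp_ge[OF fj]]) auto
    then show ?thesis
      using that True by (simp add: refl_update_other)
  next
    case False
    then show ?thesis
      using that fk[OF False] padic_val_ge_neg_mono p0 by (simp add: refl_update_other)
  qed
  with new n show ?thesis
    unfolding dominant_pole_def by auto
qed

lemma successively_append_induct:
  assumes "successively rel (xs @ ys)" "set (xs @ ys) \<subseteq> A" "xs \<noteq> []" "P xs"
    and step: "\<And>zs a. zs \<noteq> [] \<Longrightarrow> set zs \<subseteq> A \<Longrightarrow> a \<in> A \<Longrightarrow> rel (last zs) a \<Longrightarrow> P zs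
      \<Longrightarrow> P (zs @ [a])"
  shows "P (xs @ ys)"
  using assms(1,2)
proof (induction ys rule: rev_induct)
  case Nil
  then show ?case using assms(4) by simp
next
  case (snoc a ys)
  then have "successively rel (xs @ ys)" "rel (last (xs @ ys)) a"
    using assms(3) unfolding append_assoc[symmetric] successively_append_iff by auto
  then show ?case
    using snoc step[of "xs @ ys" a] assms(3) by auto
qed

definition visited_sums_ne_one :: "nat \<Rightarrow> nat list \<Rightarrow> bool" where
  "visited_sums_ne_one d ws \<longleftrightarrow> (\<forall>a\<in>set ws. weighted_row_sums d ws (a - 1) \<noteq> 1)"

text \<open>A reflection only changes the coordinate of its own letter, so it suffices that
  every new letter produces a value different from \<open>1\<close>.\<close>

lemma visited_sums_ne_one_induct:
  assumes "successively (\<noteq>) (ws @ ys)" "set (ws @ ys) \<subseteq> {1..d+2}" "ws \<noteq> []"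
    "P ws" "visited_sums_ne_one d ws"
    and step: "\<And>zs a. zs \<noteq> [] \<Longrightarrow> set zs \<subseteq> {1..d+2} \<Longrightarrow> a \<in> {1..d+2} \<Longrightarrow> last zs \<noteq> a
      \<Longrightarrow> P zs \<Longrightarrow> P (zs @ [a]) \<and> weighted_row_sums d (zs @ [a]) (a - 1) \<noteq> 1"
  shows "visited_sums_ne_one d (ws @ ys)"
proof -
  have "P (ws @ ys) \<and> visited_sums_ne_one d (ws @ ys)"
  proof (rule successively_append_induct[OF assms(1-3)])
    fix zs a
    assume zs: "zs \<noteq> []" "set zs \<subseteq> {1..d+2}" "a \<in> {1..d+2}" "last zs \<noteq> a"
      and IH: "P zs \<and> visited_sums_ne_one d zs"
    have "weighted_row_sums d (zs @ [a]) (b - 1) \<noteq> 1" if "b \<in> set zs" "b \<noteq> a" for b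
    proof -
      have "b - 1 \<noteq> a - 1"
        using that zs(2,3) by fastforce
      then show ?thesis
        using IH that(1) by (simp add: visited_sums_ne_one_def weighted_row_sums_snoc refl_update_other)
    qed
    then show "P (zs @ [a]) \<and> visited_sums_ne_one d (zs @ [a])"
      using step[OF zs] IH unfolding visited_sums_ne_one_def by auto
  qed (use assms(4,5) in simp)
  then show ?thesis ..
qed

lemma visited_sums_ne_one_padic:
  assumes p: "prime p" and c: "padic_val_eq_neg p e (refl_coef d)" "e \<ge> 1"
    and "dominant_pole p n (last ws - 1) (weighted_row_sums d ws)" "visited_sums_ne_one d ws"
    and "ws \<noteq> []" "successively (\<noteq>) (ws @ ys)" "set (ws @ ys) \<subseteq> {1..d+2}"
  shows "visited_sums_ne_one d (ws @ ys)"
proof (rule visited_sums_ne_one_induct[OF assms(7,8,6)])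
  show "\<exists>n. dominant_pole p n (last ws - 1) (weighted_row_sums d ws)"
    using assms(4) by blast
next
  fix zs a
  assume zs: "zs \<noteq> []" "set zs \<subseteq> {1..d+2}" "a \<in> {1..d+2}" "last zs \<noteq> a"
    and "\<exists>n. dominant_pole p n (last zs - 1) (weighted_row_sums d zs)"
  then obtain n where n: "dominant_pole p n (last zs - 1) (weighted_row_sums d zs)" by blast
  have "last zs \<in> {1..d+2}"
    using zs(1,2) last_in_set by blast
  then have "dominant_pole p (n + e) (a - 1) (weighted_row_sums d (zs @ [a]))"
    unfolding weighted_row_sums_snoc using zs(3,4)
    by (intro dominant_pole_refl_update[OF p c n]) auto
  then show "(\<exists>n. dominant_pole p n (last (zs @ [a]) - 1) (weighted_row_sums d (zs @ [a])))
      \<and> weighted_row_sums d (zs @ [a]) (a - 1) \<noteq> 1"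
    using dominant_pole_ne_one[OF p] by auto
qed (use assms(5) in simp)

lemma weighted_row_sums_one:
  "weighted_row_sums d [1] = (\<lambda>k. if k = 0 then 1 + refl_coef d * (real d + 1) else 1)"
proof -
  have "(\<Sum>k\<in>{..<d+2} - {0}. if k = 0 then -1 else 1) = (\<Sum>k\<in>{..<d+2} - {0}. 1::real)"
    by (intro sum.cong) auto
  also have "\<dots> = real d + 1"
    by simp
  finally show ?thesis
    by (simp add: weighted_row_sums_def refl_update_def fun_eq_iff)
qed

lemma padic_coef_odd_prime:
  assumes q: "prime q" "q \<noteq> 2" "q dvd d - 1" and d: "d \<ge> 2"
  obtains e where "e \<ge> 1" "padic_val_eq_neg (int q) e (refl_coef d)"
    "padic_val_eq_neg (int q) e (1 + refl_coef d * (real d + 1))"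
proof -
  define e where "e = multiplicity q (d - 1)"
  have "d - 1 \<noteq> 0" "\<not> is_unit q"
    using q d by auto
  then obtain u where u: "d - 1 = q ^ e * u" "\<not> q dvd u"
    unfolding e_def by (rule multiplicity_decompose')
  have "e \<ge> 1"
    unfolding e_def using q d by (simp add: Suc_le_eq prime_multiplicity_gt_zero_iff)
  have q2: "\<not> int q dvd 2"
  proof
    assume "int q dvd 2"
    then have "q dvd 2"
      by presburger
    then show False
      using q(2) prime_ge_2_nat[OF q(1)] dvd_imp_le[of q 2] by simp
  qed
  have qdvd: "int q dvd int (q ^ e * u)"
    using \<open>e \<ge> 1\<close> by (simp add: dvd_power)
  have num: "\<not> int q dvd 3 * int (q ^ e * u) + 4"
  proof
    assume "int q dvd 3 * int (q ^ e * u) + 4"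
    then have "int q dvd 2 * 2"
      using qdvd by (simp add: dvd_add_right_iff)
    with q(1) q2 show False
      using prime_dvd_mult_iff[of "int q" 2 2] by simp
  qed
  have den: "\<not> int q dvd int u"
    using u(2) by simp
  have M: "real d - 1 = of_int (int u) * of_int (int q) ^ e"
    using arg_cong[OF u(1), of real] d by (simp add: of_nat_diff mult.commute)
  have "1 + refl_coef d * (real d + 1) = (3 * (real d - 1) + 4) / (real d - 1)"
    using d by (simp add: refl_coef_def field_simps)
  then have "1 + refl_coef d * (real d + 1)
      = of_int (3 * int (q ^ e * u) + 4) / (of_int (int u) * of_int (int q) ^ e)"
    using u(1) M by simp
  then have "padic_val_eq_neg (int q) e (1 + refl_coef d * (real d + 1))"
    unfolding padic_val_eq_neg_def using num den by blast
  moreover have "padic_val_eq_neg (int q) e (refl_coef d)"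
    unfolding padic_val_eq_neg_def refl_coef_def M using q2 den
    by (intro exI[of _ 2] exI[of _ "int u"]) simp
  ultimately show ?thesis
    using that \<open>e \<ge> 1\<close> by blast
qed

lemma padic_coef_two_power:
  assumes "d - 1 = 2 ^ (j + 2)" "j \<ge> 1"
  shows "padic_val_eq_neg 2 (j + 1) (refl_coef d)"
    "padic_val_eq_neg 2 j (1 + refl_coef d * (real d + 1))"
proof -
  have M: "real d - 1 = 4 * 2 ^ j"
    using arg_cong[OF assms(1), of real] by (cases d) (simp_all add: power_add)
  have "refl_coef d = of_int 1 / (of_int 1 * of_int 2 ^ (j + 1))"
    unfolding refl_coef_def M by simp
  then show "padic_val_eq_neg 2 (j + 1) (refl_coef d)"
    unfolding padic_val_eq_neg_def by (intro exI[of _ 1]) simp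
  have "1 + refl_coef d * (real d + 1) = of_int (3 * 2 ^ j + 1) / (of_int 1 * of_int 2 ^ j)"
    unfolding refl_coef_def using M by (simp add: field_simps)
  moreover have "\<not> (2::int) dvd 3 * 2 ^ j + 1"
    using assms(2) by simp
  ultimately show "padic_val_eq_neg 2 j (1 + refl_coef d * (real d + 1))"
    unfolding padic_val_eq_neg_def by (intro exI[of _ "3 * 2 ^ j + 1"] exI[of _ 1]) simp
qed

lemma padic_coef_exists:
  assumes "d \<ge> 2" "d \<notin> {2, 3, 5}"
  obtains p e n where "prime p" "e \<ge> 1" "n \<ge> 1" "padic_val_eq_neg p e (refl_coef d)"
    "padic_val_eq_neg p n (1 + refl_coef d * (real d + 1))"
proof -
  have "d - 1 \<noteq> 0" "\<not> is_unit (2::nat)"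
    using assms by auto
  then obtain u where u: "d - 1 = 2 ^ multiplicity 2 (d - 1) * u" "odd u"
    by (rule multiplicity_decompose')
  show ?thesis
  proof (cases "u = 1")
    case False
    then obtain q where q: "prime q" "q dvd u"
      using prime_factor_nat by blast
    moreover have "q \<noteq> 2"
      using q u(2) by auto
    moreover have "q dvd d - 1"
      using q u(1) by (metis dvd_mult)
    ultimately show ?thesis
      using padic_coef_odd_prime[of q d] that[of "int q"] assms(1) by auto
  next
    case True
    define k where "k = multiplicity 2 (d - 1)"
    have "k \<ge> 3"
    proof (rule ccontr)
      assume "\<not> k \<ge> 3"
      then have "k = 0 \<or> k = 1 \<or> k = 2"
        by auto
      then show False
        using u(1) assms unfolding True k_def[symmetric] by auto
    qed
    then obtain j where "k = j + 2" "j \<ge> 1"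
      using le_Suc_ex[of 3 k] by auto
    then show ?thesis
      using padic_coef_two_power[of d j] u(1) that[of 2 "j + 1" j] unfolding True k_def by auto
  qed
qed

lemma visited_sums_ne_one_generic:
  assumes "d \<ge> 2" "d \<notin> {2, 3, 5}" "successively (\<noteq>) (1 # ys)" "set (1 # ys) \<subseteq> {1..d+2}"
  shows "visited_sums_ne_one d (1 # ys)"
proof -
  obtain p e n where p: "prime p" "e \<ge> 1" "n \<ge> 1" "padic_val_eq_neg p e (refl_coef d)"
    "padic_val_eq_neg p n (1 + refl_coef d * (real d + 1))"
    using padic_coef_exists assms(1,2) by blast
  have "dominant_pole p n 0 (weighted_row_sums d [1])"
    using p padic_val_ge_neg_of_int[OF p(1), of "n - 1" 1]
    unfolding dominant_pole_def weighted_row_sums_one by auto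
  moreover from this have "visited_sums_ne_one d [1]"
    using dominant_pole_ne_one[OF p(1)] by (simp add: visited_sums_ne_one_def)
  ultimately show ?thesis
    using visited_sums_ne_one_padic[OF p(1,4,2), of n "[1]" ys] assms(3,4) by simp
qed

text \<open>For \<open>d = 2\<close>, where \<open>c = 2\<close>: \<open>-x\<^sub>i + 2 (x\<^sub>j + \<dots>) > x\<^sub>j\<close> whenever \<open>x\<^sub>i < x\<^sub>j\<close> and the
  remaining entries are nonnegative.\<close>

definition strict_max_ge_one :: "nat \<Rightarrow> (nat \<Rightarrow> real) \<Rightarrow> bool" where
  "strict_max_ge_one j f \<longleftrightarrow> (\<forall>k<4. 1 \<le> f k) \<and> (\<forall>k<4. k \<noteq> j \<longrightarrow> f k < f j)"

lemma strict_max_gt_one: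
  assumes "strict_max_ge_one j f" "j < 4"
  shows "f j > 1"
proof -
  define k where "k = (if j = 0 then 1 else 0 :: nat)"
  have "k < 4" "k \<noteq> j"
    unfolding k_def by auto
  with assms(1) have "1 \<le> f k" "f k < f j"
    unfolding strict_max_ge_one_def by auto
  then show ?thesis
    by linarith
qed

lemma strict_max_refl_update_two:
  assumes "strict_max_ge_one j f" "j < 4" "i < 4" "i \<noteq> j"
  shows "strict_max_ge_one i (refl_update 2 i f)"
proof -
  have ge: "\<And>k. k < 4 \<Longrightarrow> 1 \<le> f k" and mx: "\<And>k. k < 4 \<Longrightarrow> k \<noteq> j \<Longrightarrow> f k < f j"
    using assms(1) unfolding strict_max_ge_one_def by auto
  have "(\<Sum>k\<in>{..<4} - {i}. f k) = f j + (\<Sum>k\<in>{..<4} - {i} - {j}. f k)"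
    using assms(2,4) by (simp add: sum.remove)
  moreover have "(\<Sum>k\<in>{..<4} - {i} - {j}. f k) \<ge> 0"
    using ge by (intro sum_nonneg) force
  ultimately have new: "refl_update 2 i f i > f j"
    using mx[OF assms(3,4)] by (simp add: refl_update_same refl_coef_def)
  have "1 \<le> refl_update 2 i f k" if "k < 4" for k
    using new ge[OF that] ge[OF assms(2)] by (cases "k = i") (simp_all add: refl_update_other)
  moreover have "refl_update 2 i f k < refl_update 2 i f i" if "k < 4" "k \<noteq> i" for k
    using new mx[OF that(1)] that(2) by (cases "k = j") (simp_all add: refl_update_other)
  ultimately show ?thesis
    unfolding strict_max_ge_one_def by blast
qed

lemma visited_sums_ne_one_two:
  assumes "successively (\<noteq>) (1 # ys)" "set (1 # ys) \<subseteq> {1..4}"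
  shows "visited_sums_ne_one 2 (1 # ys)"
proof -
  have base: "weighted_row_sums 2 [1] = (\<lambda>k. if k = 0 then 7 else 1)"
    using weighted_row_sums_one[of 2] by (simp add: refl_coef_def fun_eq_iff)
  have "visited_sums_ne_one 2 ([1] @ ys)"
  proof (rule visited_sums_ne_one_induct
      [where P = "\<lambda>zs. strict_max_ge_one (last zs - 1) (weighted_row_sums 2 zs)"])
    fix zs a
    assume zs: "zs \<noteq> []" "set zs \<subseteq> {1..2+2}" "a \<in> {1..2+2}" "last zs \<noteq> a"
      and "strict_max_ge_one (last zs - 1) (weighted_row_sums 2 zs)"
    moreover have "last zs \<in> {1..2+2}"
      using zs(1,2) last_in_set by blast
    ultimately have "strict_max_ge_one (a - 1) (weighted_row_sums 2 (zs @ [a]))"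
      unfolding weighted_row_sums_snoc by (intro strict_max_refl_update_two) auto
    then show "strict_max_ge_one (last (zs @ [a]) - 1) (weighted_row_sums 2 (zs @ [a]))
        \<and> weighted_row_sums 2 (zs @ [a]) (a - 1) \<noteq> 1"
      using strict_max_gt_one zs(3) by force
  next
    show "successively (\<noteq>) ([1] @ ys)" "set ([1] @ ys) \<subseteq> {1..2+2}"
      using assms by simp_all
    show "strict_max_ge_one (last [1] - 1) (weighted_row_sums 2 [1])"
      unfolding base strict_max_ge_one_def by simp
    show "visited_sums_ne_one 2 [1]"
      unfolding base visited_sums_ne_one_def by simp
  qed simp
  then show ?thesis
    by simp
qed

lemma weighted_row_sums_five:
  assumes "2 \<le> a" "a \<le> 7"
  shows "weighted_row_sums 5 [1, a] k = (if k = a - 1 then 7 / 2 else if k = 0 then 4 else 1)"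
proof -
  have base: "weighted_row_sums 5 [1] = (\<lambda>k. if k = 0 then 4 else 1)"
    using weighted_row_sums_one[of 5] by (simp add: refl_coef_def fun_eq_iff)
  have "(\<Sum>k\<in>{..<7} - {a - 1} - {0}. if k = 0 then 4 else 1) = (\<Sum>k\<in>{..<7} - {a - 1} - {0}. 1::real)"
    by (intro sum.cong) auto
  also have "\<dots> = 5"
    using assms by (simp add: card_Diff_singleton_if)
  finally have rest: "(\<Sum>k\<in>{..<7} - {a - 1} - {0}. if k = 0 then 4 else 1) = (5::real)" .
  have "(\<Sum>k\<in>{..<5+2} - {a - 1}. weighted_row_sums 5 [1] k)
      = (\<Sum>k\<in>{..<7} - {a - 1}. if k = 0 then 4 else 1)"
    unfolding base by simp
  also have "\<dots> = (if (0::nat) = 0 then 4 else 1) + (\<Sum>k\<in>{..<7} - {a - 1} - {0}. if k = 0 then 4 else 1)"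
    by (rule sum.remove) (use assms in auto)
  also have "\<dots> = 9"
    using rest by simp
  finally have "weighted_row_sums 5 [1, a] (a - 1) = - weighted_row_sums 5 [1] (a - 1) + refl_coef 5 * 9"
    using weighted_row_sums_snoc[of 5 "[1]" a] by (simp add: refl_update_same)
  then show ?thesis
    using weighted_row_sums_snoc[of 5 "[1]" a] assms base
    by (simp add: refl_coef_def refl_update_other)
qed

lemma visited_sums_ne_one_five:
  assumes "successively (\<noteq>) (1 # ys)" "set (1 # ys) \<subseteq> {1..7}"
  shows "visited_sums_ne_one 5 (1 # ys)"
proof (cases ys)
  case Nil
  then show ?thesis
    using weighted_row_sums_one[of 5] by (simp add: visited_sums_ne_one_def refl_coef_def)
next
  case (Cons a ys')
  then have a: "2 \<le> a" "a \<le> 7"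
    using assms by auto
  have "padic_val_eq_neg 2 1 (weighted_row_sums 5 [1, a] (a - 1))"
    unfolding padic_val_eq_neg_def weighted_row_sums_five[OF a]
    by (intro exI[of _ 7] exI[of _ 1]) simp
  moreover have "padic_val_ge_neg 2 0 (weighted_row_sums 5 [1, a] k)" if "k \<noteq> a - 1" for k
    using that weighted_row_sums_five[OF a, of k] padic_val_ge_neg_of_int[of 2 0 4]
      padic_val_ge_neg_of_int[of 2 0 1] by simp
  ultimately have "dominant_pole 2 1 (a - 1) (weighted_row_sums 5 [1, a])"
    unfolding dominant_pole_def by auto
  moreover have "visited_sums_ne_one 5 [1, a]"
    using a weighted_row_sums_five[OF a] by (auto simp: visited_sums_ne_one_def)
  moreover have "padic_val_eq_neg 2 1 (refl_coef 5)"
    unfolding padic_val_eq_neg_def refl_coef_def by (intro exI[of _ 1]) auto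
  ultimately show ?thesis
    using visited_sums_ne_one_padic[of 2 1 5 1 "[1, a]" ys'] assms Cons by simp
qed

theorem lemma4p9:
  fixes d :: nat and ws :: "nat list"
  assumes "d \<ge> 2" and "d \<noteq> 3"
    and "ws \<noteq> []"
    and "\<forall>a\<in>set ws. 1 \<le> a \<and> a \<le> d + 2"
    and "ws ! 0 = 1"
    and "\<forall>j. Suc j < length ws \<longrightarrow> ws ! j \<noteq> ws ! Suc j"
  shows "\<forall>i. 1 \<le> i \<and> i \<le> d + 2 \<and> i \<in> set ws \<longrightarrow> sigma i (w_vec d) (word_mat d ws) \<noteq> 1"
proof -
  obtain ys where ws: "ws = 1 # ys"
    using assms(3,5) by (cases ws) auto
  have succ: "successively (\<noteq>) (1 # ys)"
    using assms(6) unfolding ws successively_conv_nth by blast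
  have letters: "set (1 # ys) \<subseteq> {1..d+2}"
    using assms(4) unfolding ws by auto
  consider "d = 2" | "d = 5" | "d \<notin> {2, 3, 5}"
    using assms(2) by auto
  then have "visited_sums_ne_one d ws"
  proof cases
    case 1
    then show ?thesis
      using visited_sums_ne_one_two[OF succ] letters unfolding ws by simp
  next
    case 2
    then show ?thesis
      using visited_sums_ne_one_five[OF succ] letters unfolding ws by simp
  next
    case 3
    then show ?thesis
      unfolding ws by (rule visited_sums_ne_one_generic[OF assms(1) _ succ letters])
  qed
  then show ?thesis
    using sigma_eq_weighted_row_sums[of d] assms(1) by (simp add: visited_sums_ne_one_def)
qed

end
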